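(* Let $\mathcal{L}$ be a language with semantic structure $\mathcal{S}=(\Sigma,I)$, and assume $\mathcal{L}$ is closed under infinite logical conjunction. Let $\mathcal{S}^\sharp=(\mathrm{AD}_{\mathcal{L}},I^\sharp)$ be an abstract semantic structure on $\mathrm{AD}_{\mathcal{L}}$. If $[\![\cdot]\!]_{\mathcal{S}^\sharp}$ is strongly preserving for $\mathcal{L}$, then $I^\sharp=I^{\mathrm{AD}_{\mathcal{L}}}$.
   Context: A language $\mathcal{L}$ has formulae $\varphi::=p\mid f(\varphi_1,\dots,\varphi_n)$, $p$ in a set $AP$ of atoms, $f$ in a finite set $Op$ of operators of arity $\ge1$. A semantic structure $\mathcal{S}=(\Sigma,I)$ gives $\mathbf{p}=I(p)\subseteq\Sigma$ and $\mathbf{f}=I(f):\wp(\Sigma)^{n}\to\wp(\Sigma)$, with $[\![p]\!]_{\mathcal{S}}=\mathbf{p}$, $[\![f(\varphi_1,..)]\!]_{\mathcal{S}}=\mathbf{f}([\![\varphi_1]\!]_{\mathcal{S}},..)$. $\mathcal{L}$ is closed under infinite logical conjunction if for every $\Phi\subseteq\mathcal{L}$ (including $\Phi=\varnothing$) there is $\psi\in\mathcal{L}$ with $\bigcap_{\varphi\in\Phi}[\![\varphi]\!]_{\mathcal{S}}=[\![\psi]\!]_{\mathcal{S}}$ (empty intersection $=\Sigma$). $\mathrm{AD}_{\mathcal{L}}$ is the abstract domain of $\wp(\Sigma)_\subseteq$ whose elements are the intersections of subfamilies of $\{[\![\varphi]\!]_{\mathcal{S}}\mid\varphi\in\mathcal{L}\}$,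 ordered by inclusion, with $\alpha(S)=\bigcap\{[\![\varphi]\!]_{\mathcal{S}}\mid S\subseteq[\![\varphi]\!]_{\mathcal{S}}\}$ and $\gamma$ the inclusion. An abstract semantic structure $(A,I^\sharp)$ on an abstract domain $A$ (Galois insertion $(\alpha,\wp(\Sigma),A,\gamma)$) assigns $I^\sharp(p)\in A$ and $I^\sharp(f):A^n\to A$ and induces $[\![\cdot]\!]_{\mathcal{S}^\sharp}:\mathcal{L}\to A$ compositionally; it is strongly preserving for $\mathcal{L}$ if for all $\varphi$, $S$: $\alpha(S)\le_A[\![\varphi]\!]_{\mathcal{S}^\sharp}\iff S\subseteq[\![\varphi]\!]_{\mathcal{S}}$. The best-correct-approximation interpretation is $I^A(p)=\alpha(\mathbf{p})$, $I^A(f)=\alpha\circ\mathbf{f}\circ(\gamma,\dots,\gamma)$. *)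

theory Defs
  imports Main
begin

datatype ('ap, 'op) form = Atom 'ap | App 'op "('ap, 'op) form list"

inductive wf_form :: "'ap set \<Rightarrow> 'op set \<Rightarrow> ('op \<Rightarrow> nat) \<Rightarrow> ('ap, 'op) form \<Rightarrow> bool"
  for AP Op ar where
  wf_atom: "p \<in> AP \<Longrightarrow> wf_form AP Op ar (Atom p)"
| wf_app: "f \<in> Op \<Longrightarrow> length xs = ar f \<Longrightarrow> (\<forall>x\<in>set xs. wf_form AP Op ar x)
            \<Longrightarrow> wf_form AP Op ar (App f xs)"

definition lang :: "'ap set \<Rightarrow> 'op set \<Rightarrow> ('op \<Rightarrow> nat) \<Rightarrow> ('ap, 'op) form set" where
  "lang AP Op ar = {\<phi>. wf_form AP Op ar \<phi>}"

text \<open>Compositional semantics induced by an interpretation of atoms and operators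
  (used both for concrete and abstract semantic structures; values are sets).\<close>
fun sem :: "('ap \<Rightarrow> 'v) \<Rightarrow> ('op \<Rightarrow> 'v list \<Rightarrow> 'v) \<Rightarrow> ('ap, 'op) form \<Rightarrow> 'v" where
  "sem Ia Io (Atom p) = Ia p"
| "sem Ia Io (App f xs) = Io f (map (sem Ia Io) xs)"

definition closed_inf_conj ::
  "('ap, 'op) form set \<Rightarrow> (('ap, 'op) form \<Rightarrow> 's set) \<Rightarrow> bool" where
  "closed_inf_conj L S \<longleftrightarrow> (\<forall>\<Phi> \<subseteq> L. \<exists>\<psi>\<in>L. (\<Inter>\<phi>\<in>\<Phi>. S \<phi>) = S \<psi>)"

definition AD :: "('ap, 'op) form set \<Rightarrow> (('ap, 'op) form \<Rightarrow> 's set) \<Rightarrow> 's set set" where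
  "AD L S = {\<Inter>F | F. F \<subseteq> S ` L}"

definition alpha_AD :: "('ap, 'op) form set \<Rightarrow> (('ap, 'op) form \<Rightarrow> 's set) \<Rightarrow> 's set \<Rightarrow> 's set" where
  "alpha_AD L S X = \<Inter>{S \<phi> | \<phi>. \<phi> \<in> L \<and> X \<subseteq> S \<phi>}"

end

theory Submission
  imports Defs
begin

text \<open>Closure under arbitrary conjunction makes every element of AD_L the denotation of a
  single formula, and such denotations are fixed points of \<alpha>. As the abstract semantics
  only takes values in AD_L, strong preservation instantiated with S := [[\<phi>]]# and with
  S := [[\<phi>]] yields the two inclusions of [[\<phi>]]# = [[\<phi>]] for every formula \<phi>. Reading this
  equation at atoms, and at an operator applied to formulas whose denotations are the given
  abstract arguments, gives I# = I^A.\<close>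

lemma AD_eq_image_if_closed_inf_conj:
  assumes "closed_inf_conj L S"
  shows "AD L S = S ` L"
proof
  show "S ` L \<subseteq> AD L S"
    unfolding AD_def by (auto intro!: exI[of _ "{S \<phi>}" for \<phi>])
  show "AD L S \<subseteq> S ` L"
  proof
    fix X assume "X \<in> AD L S"
    then obtain F where F: "F \<subseteq> S ` L" "X = \<Inter>F"
      unfolding AD_def by blast
    let ?\<Phi> = "{\<phi> \<in> L. S \<phi> \<in> F}"
    obtain \<psi> where "\<psi> \<in> L" "(\<Inter>\<phi>\<in>?\<Phi>. S \<phi>) = S \<psi>"
      using assms unfolding closed_inf_conj_def by (metis (no_types, lifting) mem_Collect_eq subsetI)
    moreover have "(\<Inter>\<phi>\<in>?\<Phi>. S \<phi>) = X"
      using F by blast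
    ultimately show "X \<in> S ` L" by auto
  qed
qed

lemma alpha_AD_sem_eq:
  assumes "\<phi> \<in> L"
  shows "alpha_AD L S (S \<phi>) = S \<phi>"
  using assms unfolding alpha_AD_def by blast

lemma sem_in_if_interpretation_in:
  assumes "wf_form AP Op ar \<phi>"
    and "\<forall>p\<in>AP. Ia p \<in> A"
    and "\<forall>f\<in>Op. \<forall>xs. length xs = ar f \<and> set xs \<subseteq> A \<longrightarrow> Io f xs \<in> A"
  shows "sem Ia Io \<phi> \<in> A"
  using assms(1)
proof (induction rule: wf_form.induct)
  case (wf_atom p)
  then show ?case using assms(2) by simp
next
  case (wf_app f xs)
  then have "length (map (sem Ia Io) xs) = ar f" "set (map (sem Ia Io) xs) \<subseteq> A"
    by auto
  then show ?case using assms(3) \<open>f \<in> Op\<close> by simp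
qed

lemma strongly_preserving_sem_eq:
  assumes "\<phi> \<in> L"
    and "T \<phi> \<in> S ` L"
    and strong: "\<And>X. alpha_AD L S X \<subseteq> T \<phi> \<longleftrightarrow> X \<subseteq> S \<phi>"
  shows "T \<phi> = S \<phi>"
proof
  obtain \<psi> where "\<psi> \<in> L" "T \<phi> = S \<psi>"
    using \<open>T \<phi> \<in> S ` L\<close> by blast
  then have "alpha_AD L S (T \<phi>) = T \<phi>"
    by (simp add: alpha_AD_sem_eq)
  then show "T \<phi> \<subseteq> S \<phi>"
    using strong[of "T \<phi>"] by simp
  show "S \<phi> \<subseteq> T \<phi>"
    using strong[of "S \<phi>"] alpha_AD_sem_eq[OF \<open>\<phi> \<in> L\<close>, where S = S] by simp
qed

lemma abstract_sem_eq_sem_if_strongly_preserving: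
  assumes closed: "closed_inf_conj (lang AP Op ar) (sem Ia Io)"
    and abs_atoms: "\<forall>p\<in>AP. IAa p \<in> AD (lang AP Op ar) (sem Ia Io)"
    and abs_ops: "\<forall>f\<in>Op. \<forall>xs. length xs = ar f \<and> set xs \<subseteq> AD (lang AP Op ar) (sem Ia Io)
                    \<longrightarrow> IAo f xs \<in> AD (lang AP Op ar) (sem Ia Io)"
    and strong: "\<forall>X. alpha_AD (lang AP Op ar) (sem Ia Io) X \<subseteq> sem IAa IAo \<phi> \<longleftrightarrow> X \<subseteq> sem Ia Io \<phi>"
    and "\<phi> \<in> lang AP Op ar"
  shows "sem IAa IAo \<phi> = sem Ia Io \<phi>"
proof (rule strongly_preserving_sem_eq[OF \<open>\<phi> \<in> lang AP Op ar\<close>])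
  have "sem IAa IAo \<phi> \<in> AD (lang AP Op ar) (sem Ia Io)"
    using sem_in_if_interpretation_in abs_atoms abs_ops \<open>\<phi> \<in> lang AP Op ar\<close>
    by (simp add: lang_def)
  then show "sem IAa IAo \<phi> \<in> sem Ia Io ` lang AP Op ar"
    unfolding AD_eq_image_if_closed_inf_conj[OF closed] .
qed (use strong in blast)

theorem theorem5p5:
  fixes AP :: "'ap set" and Op :: "'op set" and ar :: "'op \<Rightarrow> nat"
    and Ia :: "'ap \<Rightarrow> 's set" and Io :: "'op \<Rightarrow> 's set list \<Rightarrow> 's set"
    and IAa :: "'ap \<Rightarrow> 's set" and IAo :: "'op \<Rightarrow> 's set list \<Rightarrow> 's set"
  assumes finOp: "finite Op"
    and arity: "\<forall>f\<in>Op. ar f \<ge> 1"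
    and closed: "closed_inf_conj (lang AP Op ar) (sem Ia Io)"
    and abs_atoms: "\<forall>p\<in>AP. IAa p \<in> AD (lang AP Op ar) (sem Ia Io)"
    and abs_ops: "\<forall>f\<in>Op. \<forall>xs. length xs = ar f \<and> set xs \<subseteq> AD (lang AP Op ar) (sem Ia Io)
                    \<longrightarrow> IAo f xs \<in> AD (lang AP Op ar) (sem Ia Io)"
    and strong: "\<forall>\<phi>\<in>lang AP Op ar. \<forall>S.
                   alpha_AD (lang AP Op ar) (sem Ia Io) S \<subseteq> sem IAa IAo \<phi> \<longleftrightarrow> S \<subseteq> sem Ia Io \<phi>"
  shows "(\<forall>p\<in>AP. IAa p = alpha_AD (lang AP Op ar) (sem Ia Io) (Ia p))
       \<and> (\<forall>f\<in>Op. \<forall>xs. length xs = ar f \<and> set xs \<subseteq> AD (lang AP Op ar) (sem Ia Io)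
            \<longrightarrow> IAo f xs = alpha_AD (lang AP Op ar) (sem Ia Io) (Io f xs))"
proof -
  let ?L = "lang AP Op ar" and ?S = "sem Ia Io" and ?T = "sem IAa IAo"
  have sem_eq: "?T \<phi> = ?S \<phi>" if "\<phi> \<in> ?L" for \<phi>
    using abstract_sem_eq_sem_if_strongly_preserving[OF closed abs_atoms abs_ops] strong that
    by blast
  have atoms: "IAa p = alpha_AD ?L ?S (Ia p)" if "p \<in> AP" for p
    using sem_eq[of "Atom p"] alpha_AD_sem_eq[of "Atom p" ?L ?S] that
    by (simp add: lang_def wf_atom)
  have ops: "IAo f xs = alpha_AD ?L ?S (Io f xs)"
    if "f \<in> Op" "length xs = ar f" "set xs \<subseteq> AD ?L ?S" for f xs
  proof -
    have "xs \<in> map ?S ` lists ?L"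
      using that(3) unfolding AD_eq_image_if_closed_inf_conj[OF closed] lists_image[symmetric]
      by blast
    then obtain \<phi>s where \<phi>s: "\<phi>s \<in> lists ?L" "xs = map ?S \<phi>s"
      by blast
    then have "map ?T \<phi>s = xs" and "App f \<phi>s \<in> ?L"
      using sem_eq that(1,2) by (auto simp: lang_def in_lists_conv_set intro!: wf_app)
    then show ?thesis
      using sem_eq[of "App f \<phi>s"] alpha_AD_sem_eq[of "App f \<phi>s" ?L ?S] \<phi>s(2)
      by (simp only: sem.simps)
  qed
  show ?thesis
    using atoms ops by blast
qed

end
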